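(* Let $(F_n)_{n\ge1}$ be a sequence of probability distribution functions on $\mathbb{R}$, and let $X$ denote a random variable with distribution $F_n$. Assume: (i) $0<F_n(0)$ for all $n$ and $F_n(0)\to0$; (ii) $\mu_n:=\mathbb{E}_{F_n}[X]\ge\mu$ for all $n$, for some constant $\mu>0$; (iii) there are constants $C,K,M<\infty$ such that for every $n$: $\mathbb{E}_{F_n}[X^2]\le C$, $\mathbb{E}_{F_n}[X^2\mid X\le0]\le K$, and $F_n(x+t)-F_n(x)\le Mt$ for all $x\ge0$, $t>0$. Define $G_n(y)=\int_{-\infty}^{y}(x^2-yx)\,dF_n(x)$ and let $y_n^*\ge0$ be the (unique) zero of $G_n$ in $[0,\infty)$. Then $$F_n(y_n^* )\le F_n(0)+\Theta^{1/3}F_n(0)^{1/3},\qquad \Theta=27\Big(K+\frac{C\sqrt K}{\mu}\Big)M^2,$$ so in particular $F_n(y_n^* )=O(F_n(0)^{1/3})\to0$ as $n\to\infty$. *)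

theory Defs
  imports "HOL-Probability.Probability"
begin

definition G_fun :: "real measure \<Rightarrow> real \<Rightarrow> real" where
  "G_fun M y = (LINT x:{..y}|M. x\<^sup>2 - y * x)"

definition cond_second_moment_nonpos :: "real measure \<Rightarrow> real" where
  "cond_second_moment_nonpos M = (LINT x:{..0}|M. x\<^sup>2) / cdf M 0"

end

theory Submission
  imports Defs
begin

(* Write p = F(0) and q = F(y) - F(0) for the root y of G. Splitting G(y) = 0 at the origin
   shows that the integral of x (y - x) over (0, y] equals E[X^2; X \<le> 0] + y E[-X; X \<le> 0],
   which is at most (K + y sqrt K) p by Cauchy-Schwarz; moreover y \<le> C / \<mu>, because G(y) = 0
   forces y E[X] \<le> E[X^2]. Conversely, the density bound M leaves mass at least q / 3 in
   (a, y - a] with a = q / (3 M), where x (y - x) \<ge> 2 a^2; so the same integral is at least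
   2 q^3 / (27 M^2). Together q^3 \<le> \<Theta> p. *)

lemma set_integral_square_le:
  fixes f :: "'a \<Rightarrow> real"
  assumes "finite_measure D" "A \<in> sets D"
    and "set_integrable D A f" "set_integrable D A (\<lambda>x. (f x)\<^sup>2)"
  shows "(LINT x:A|D. f x)\<^sup>2 \<le> measure D A * (LINT x:A|D. (f x)\<^sup>2)"
proof -
  interpret finite_measure D by fact
  define T where "T = (LINT x:A|D. f x)"
  define S where "S = (LINT x:A|D. (f x)\<^sup>2)"
  define m where "m = measure D A"
  have const: "set_integrable D A (\<lambda>_. c)" for c :: real
    unfolding set_integrable_def using assms(2)
    by (intro integrable_indicator) (simp_all add: less_top[symmetric])
  have quadratic: "0 \<le> S - 2 * c * T + c\<^sup>2 * m" for c
  proof -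
    have "0 \<le> (LINT x:A|D. (f x - c)\<^sup>2)"
      unfolding set_lebesgue_integral_def by (intro integral_nonneg_AE) simp
    also have "\<dots> = (LINT x:A|D. (f x)\<^sup>2 - 2 * c * f x + c\<^sup>2)"
      by (simp add: power2_diff algebra_simps)
    also have "\<dots> = S - 2 * c * T + c\<^sup>2 * m"
      using assms(3,4) const assms(2)
      by (simp add: set_integral_const S_def T_def m_def emeasure_finite)
    finally show ?thesis .
  qed
  have "m \<ge> 0" unfolding m_def by simp
  then consider (null) "m = 0" | (pos) "m > 0" by linarith
  then have "T\<^sup>2 \<le> m * S"
  proof cases
    case null
    have "T = 0"
    proof (rule ccontr)
      assume "T \<noteq> 0"
      then show False using quadratic[of "(S + 1) / (2 * T)"] null by (simp add: field_simps)
    qed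
    then show ?thesis using null by simp
  next
    case pos
    then show ?thesis using quadratic[of "T / m"] by (simp add: field_simps power2_eq_square)
  qed
  then show ?thesis unfolding T_def S_def m_def .
qed

lemma power_le_mult_imp_le_powr:
  fixes q a b :: real
  assumes "0 < n" "0 \<le> q" "0 < b" "q ^ n \<le> a * b"
  shows "q \<le> a powr (1 / n) * b powr (1 / n)"
proof -
  have "0 \<le> a * b" using assms(2,4) by (meson order_trans zero_le_power)
  then have "0 \<le> a" using \<open>0 < b\<close> by (simp add: zero_le_mult_iff)
  have "q = root n (q ^ n)" using assms(1,2) by (simp add: real_root_power_cancel)
  also have "\<dots> \<le> root n (a * b)" using assms(1,4) by (rule real_root_le_mono)
  also have "\<dots> = a powr (1 / n) * b powr (1 / n)"
    using assms(1,3) \<open>0 \<le> a\<close> by (simp add: root_powr_inverse powr_mult)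
  finally show ?thesis .
qed

lemma (in real_distribution) set_integrable_of_integrable:
  fixes f :: "real \<Rightarrow> real"
  assumes "A \<in> sets borel" "integrable M f"
  shows "set_integrable M A f"
  unfolding set_integrable_def using assms by (intro integrable_mult_indicator) simp_all

lemma G_fun_split:
  assumes distr: "real_distribution D" and sq_int: "integrable D (\<lambda>x. x\<^sup>2)" and "0 \<le> y"
  shows "G_fun D y = (LINT x:{..0}|D. x\<^sup>2) + y * (LINT x:{..0}|D. - x)
                     - (LINT x:{0<..y}|D. x * (y - x))"
proof -
  interpret real_distribution D by (rule distr)
  have int_x: "integrable D (\<lambda>x. x)"
    by (rule square_integrable_imp_integrable) (auto simp: sq_int)
  have "integrable D (\<lambda>x. x * (y - x))"
    using int_x sq_int by (simp add: algebra_simps power2_eq_square[symmetric])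
  then have ints: "set_integrable D {..0} (\<lambda>x. x\<^sup>2)" "set_integrable D {..0} (\<lambda>x. - x)"
      "set_integrable D {0<..y} (\<lambda>x. x * (y - x))"
    using set_integrable_of_integrable sq_int int_x by auto
  have "G_fun D y = (\<integral>x. indicator {..0} x * x\<^sup>2 + y * (indicator {..0} x * - x)
                        - indicator {0<..y} x * (x * (y - x)) \<partial>D)"
    unfolding G_fun_def set_lebesgue_integral_def using \<open>0 \<le> y\<close>
    by (intro Bochner_Integration.integral_cong refl)
      (auto simp: indicator_def algebra_simps power2_eq_square)
  also have "\<dots> = (LINT x:{..0}|D. x\<^sup>2) + y * (LINT x:{..0}|D. - x)
                   - (LINT x:{0<..y}|D. x * (y - x))"
    using ints unfolding set_integrable_def set_lebesgue_integral_def by simp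
  finally show ?thesis .
qed

lemma G_fun_root_mean_le:
  assumes distr: "real_distribution D" and sq_int: "integrable D (\<lambda>x. x\<^sup>2)"
    and "0 \<le> y" and root: "G_fun D y = 0"
  shows "y * (\<integral>x. x \<partial>D) \<le> (\<integral>x. x\<^sup>2 \<partial>D)"
proof -
  interpret real_distribution D by (rule distr)
  have int_x: "integrable D (\<lambda>x. x)"
    by (rule square_integrable_imp_integrable) (auto simp: sq_int)
  have int_yx: "integrable D (\<lambda>x. y * x - x\<^sup>2)" and int_G: "integrable D (\<lambda>x. x\<^sup>2 - y * x)"
    using int_x sq_int by simp_all
  have "y * (\<integral>x. x \<partial>D) - (\<integral>x. x\<^sup>2 \<partial>D) = (\<integral>x. y * x - x\<^sup>2 \<partial>D)"
    using int_x sq_int by simp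
  also have "\<dots> \<le> (LINT x:{..y}|D. y * x - x\<^sup>2)"
    unfolding set_lebesgue_integral_def
  proof (rule integral_mono)
    show "integrable D (\<lambda>x. indicator {..y} x *\<^sub>R (y * x - x\<^sup>2))"
      using set_integrable_of_integrable[OF _ int_yx] unfolding set_integrable_def by simp
    fix x
    have "x * (y - x) \<le> 0" if "y < x" using that \<open>0 \<le> y\<close> by (intro mult_nonneg_nonpos) auto
    then show "y * x - x\<^sup>2 \<le> indicator {..y} x *\<^sub>R (y * x - x\<^sup>2)"
      by (auto simp: indicator_def algebra_simps power2_eq_square)
  qed (rule int_yx)
  also have "\<dots> = - G_fun D y"
  proof -
    have "set_integrable D {..y} (\<lambda>x. x\<^sup>2 - y * x)"
      using set_integrable_of_integrable[OF _ int_G] by simp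
    then show ?thesis
      using set_integral_uminus[of D "{..y}" "\<lambda>x. x\<^sup>2 - y * x"] unfolding G_fun_def by simp
  qed
  finally show ?thesis using root by simp
qed

lemma cdf_increment_cube_le:
  fixes D :: "real measure" and M y :: real
  assumes distr: "real_distribution D"
    and lip: "\<And>x t. 0 \<le> x \<Longrightarrow> 0 < t \<Longrightarrow> cdf D (x + t) - cdf D x \<le> M * t"
    and "0 \<le> y"
  shows "2 * (cdf D y - cdf D 0) ^ 3 \<le> 27 * M\<^sup>2 * (LINT x:{0<..y}|D. x * (y - x))"
proof -
  interpret real_distribution D by (rule distr)
  define q where "q = cdf D y - cdf D 0"
  define L where "L = (LINT x:{0<..y}|D. x * (y - x))"
  have range: "0 \<le> x * (y - x) \<and> x * (y - x) \<le> y\<^sup>2" if "x \<in> {0<..y}" for x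
    using that by (auto simp: power2_eq_square intro: mult_mono)
  have int_L: "integrable D (\<lambda>x. indicator {0<..y} x *\<^sub>R (x * (y - x)))"
    by (rule integrable_const_bound[where B = "y\<^sup>2"]) (use range in \<open>auto simp: indicator_def\<close>)
  have "0 \<le> L"
    unfolding L_def set_lebesgue_integral_def using range
    by (intro integral_nonneg_AE) (auto simp: indicator_def)
  have "q \<le> M * y"
    using lip[of 0 y] \<open>0 \<le> y\<close> unfolding q_def by (cases "y = 0") auto
  show ?thesis
  proof (cases "q \<le> 0")
    case True
    then have "q = 0" unfolding q_def using cdf_nondecreasing[OF \<open>0 \<le> y\<close>] by simp
    then show ?thesis using \<open>0 \<le> L\<close> unfolding q_def L_def by simp
  next
    case False
    with \<open>q \<le> M * y\<close> \<open>0 \<le> y\<close> have "0 < M"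
      by (smt (verit) mult_nonpos_nonneg)
    define a where "a = q / (3 * M)"
    have "0 < a" "M * a = q / 3" "3 * a \<le> y"
      using False \<open>0 < M\<close> \<open>q \<le> M * y\<close> unfolding a_def by (auto simp: field_simps)
    have "cdf D a - cdf D 0 \<le> q / 3" "cdf D y - cdf D (y - a) \<le> q / 3"
      using lip[of 0 a] lip[of "y - a" a] \<open>0 < a\<close> \<open>M * a = q / 3\<close> \<open>3 * a \<le> y\<close> by simp_all
    moreover have "measure D {a<..y - a} = cdf D (y - a) - cdf D a"
      using cdf_diff_eq[of a "y - a"] \<open>0 < a\<close> \<open>3 * a \<le> y\<close> by simp
    ultimately have mass: "q / 3 \<le> measure D {a<..y - a}"
      unfolding q_def by (simp add: field_simps)
    have "2 * a\<^sup>2 * measure D {a<..y - a} \<le> L"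
    proof -
      have "2 * a\<^sup>2 \<le> x * (y - x)" if "x \<in> {a<..y - a}" for x
      proof -
        have "0 \<le> (x - a) * (y - a - x)" using that by (intro mult_nonneg_nonneg) auto
        moreover have "0 \<le> a * (y - 3 * a)" using \<open>0 < a\<close> \<open>3 * a \<le> y\<close> by simp
        ultimately show ?thesis by (simp add: algebra_simps power2_eq_square)
      qed
      then have "(\<integral>x. indicator {a<..y - a} x *\<^sub>R (2 * a\<^sup>2) \<partial>D)
                   \<le> (\<integral>x. indicator {0<..y} x *\<^sub>R (x * (y - x)) \<partial>D)"
        using \<open>0 < a\<close> range
        by (intro integral_mono int_L integrable_indicator) (auto simp: indicator_def less_top[symmetric])
      then show ?thesis unfolding L_def set_lebesgue_integral_def by (simp add: mult.commute)
    qed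
    have "2 * q ^ 3 = 27 * M\<^sup>2 * (2 * a\<^sup>2 * (q / 3))"
      using \<open>0 < M\<close> unfolding a_def by (simp add: field_simps power2_eq_square power3_eq_cube)
    also have "\<dots> \<le> 27 * M\<^sup>2 * (2 * a\<^sup>2 * measure D {a<..y - a})"
      using mass by (intro mult_left_mono) auto
    also have "\<dots> \<le> 27 * M\<^sup>2 * L"
      using \<open>2 * a\<^sup>2 * measure D {a<..y - a} \<le> L\<close> by (rule mult_left_mono) simp
    finally show ?thesis unfolding q_def L_def .
  qed
qed

lemma cdf_G_fun_root_cube_le:
  fixes D :: "real measure" and \<mu> C K M y :: real
  assumes distr: "real_distribution D"
    and p_pos: "0 < cdf D 0"
    and mu_pos: "0 < \<mu>"
    and sq_int: "integrable D (\<lambda>x. x\<^sup>2)"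
    and mean_ge: "\<mu> \<le> (\<integral>x. x \<partial>D)"
    and second_le: "(\<integral>x. x\<^sup>2 \<partial>D) \<le> C"
    and cond_le: "cond_second_moment_nonpos D \<le> K"
    and lip: "\<And>x t. 0 \<le> x \<Longrightarrow> 0 < t \<Longrightarrow> cdf D (x + t) - cdf D x \<le> M * t"
    and "0 \<le> y" and root: "G_fun D y = 0"
  shows "(cdf D y - cdf D 0) ^ 3 \<le> 27 * (K + C * sqrt K / \<mu>) * M\<^sup>2 * cdf D 0"
proof -
  interpret real_distribution D by (rule distr)
  define p where "p = cdf D 0"
  define S where "S = (LINT x:{..0}|D. x\<^sup>2)"
  define T where "T = (LINT x:{..0}|D. - x)"
  define L where "L = (LINT x:{0<..y}|D. x * (y - x))"
  have int_x: "integrable D (\<lambda>x. x)"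
    by (rule square_integrable_imp_integrable) (auto simp: sq_int)
  have "L = S + y * T"
    using G_fun_split[OF distr sq_int \<open>0 \<le> y\<close>] root unfolding S_def T_def L_def by simp
  have "S \<le> K * p"
    using cond_le p_pos unfolding cond_second_moment_nonpos_def S_def p_def by (simp add: divide_le_eq)
  have "0 \<le> S" "0 \<le> T"
    unfolding S_def T_def set_lebesgue_integral_def
    by (intro integral_nonneg_AE; simp add: indicator_def)+
  have "0 \<le> K"
    using \<open>0 \<le> S\<close> \<open>S \<le> K * p\<close> p_pos unfolding p_def by (smt (verit) mult_neg_pos)
  have "set_integrable D {..0} (\<lambda>x. - x)" "set_integrable D {..0} (\<lambda>x. (- x)\<^sup>2)"
    using set_integrable_of_integrable int_x sq_int by auto
  then have "T\<^sup>2 \<le> p * S"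
    using set_integral_square_le[of D "{..0}" "\<lambda>x. - x"]
    unfolding T_def S_def p_def cdf_def by (simp add: finite_measure_axioms)
  also have "\<dots> \<le> p * (K * p)"
    using \<open>S \<le> K * p\<close> p_pos unfolding p_def by simp
  also have "\<dots> = (sqrt K * p)\<^sup>2"
    using \<open>0 \<le> K\<close> by (simp add: power_mult_distrib power2_eq_square)
  finally have "T \<le> sqrt K * p"
    by (rule power2_le_imp_le) (use \<open>0 \<le> K\<close> p_pos in \<open>simp add: p_def\<close>)
  have "y * \<mu> \<le> C"
    using mult_left_mono[OF mean_ge \<open>0 \<le> y\<close>] G_fun_root_mean_le[OF distr sq_int \<open>0 \<le> y\<close> root]
      second_le by linarith
  then have "y \<le> C / \<mu>"
    using mu_pos by (simp add: field_simps)
  then have "y * T \<le> C / \<mu> * (sqrt K * p)"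
    using \<open>T \<le> sqrt K * p\<close> \<open>0 \<le> T\<close> \<open>0 \<le> y\<close> by (intro mult_mono) auto
  then have "L \<le> (K + C * sqrt K / \<mu>) * p"
    using \<open>L = S + y * T\<close> \<open>S \<le> K * p\<close> by (simp add: algebra_simps)
  then have "27 * M\<^sup>2 * L \<le> 27 * M\<^sup>2 * ((K + C * sqrt K / \<mu>) * p)"
    by (rule mult_left_mono) simp
  also have "\<dots> = 27 * (K + C * sqrt K / \<mu>) * M\<^sup>2 * p"
    by (simp only: mult_ac)
  finally have "27 * M\<^sup>2 * L \<le> 27 * (K + C * sqrt K / \<mu>) * M\<^sup>2 * p" .
  moreover have "2 * (cdf D y - cdf D 0) ^ 3 \<le> 27 * M\<^sup>2 * L"
    unfolding L_def by (rule cdf_increment_cube_le[OF distr lip \<open>0 \<le> y\<close>])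
  moreover have "0 \<le> (cdf D y - cdf D 0) ^ 3"
    using cdf_nondecreasing[OF \<open>0 \<le> y\<close>] by simp
  ultimately show ?thesis
    unfolding p_def by linarith
qed

theorem theorem3:
  fixes P :: "nat \<Rightarrow> real measure"
    and \<mu> C K M :: real
    and ystar :: "nat \<Rightarrow> real"
  assumes distr: "\<And>n. real_distribution (P n)"
    and F0_pos: "\<And>n. 0 < cdf (P n) 0"
    and F0_lim: "(\<lambda>n. cdf (P n) 0) \<longlonglongrightarrow> 0"
    and mu_pos: "\<mu> > 0"
    and sq_int: "\<And>n. integrable (P n) (\<lambda>x. x\<^sup>2)"
    and mean_ge: "\<And>n. (\<integral>x. x \<partial>P n) \<ge> \<mu>"
    and second_le: "\<And>n. (\<integral>x. x\<^sup>2 \<partial>P n) \<le> C"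
    and cond_le: "\<And>n. cond_second_moment_nonpos (P n) \<le> K"
    and lip: "\<And>n x t. x \<ge> 0 \<Longrightarrow> t > 0 \<Longrightarrow> cdf (P n) (x + t) - cdf (P n) x \<le> M * t"
    and ystar_nonneg: "\<And>n. ystar n \<ge> 0"
    and ystar_zero: "\<And>n. G_fun (P n) (ystar n) = 0"
  shows "(\<forall>n. cdf (P n) (ystar n) \<le> cdf (P n) 0
              + (27 * (K + C * sqrt K / \<mu>) * M\<^sup>2) powr (1/3) * (cdf (P n) 0) powr (1/3))
         \<and> (\<lambda>n. cdf (P n) (ystar n)) \<longlonglongrightarrow> 0"
proof -
  define bound where "bound = (\<lambda>n. cdf (P n) 0
    + (27 * (K + C * sqrt K / \<mu>) * M\<^sup>2) powr (1/3) * cdf (P n) 0 powr (1/3))"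
  have upper: "cdf (P n) (ystar n) \<le> bound n" for n
  proof -
    interpret real_distribution "P n" by (rule distr)
    have "cdf (P n) (ystar n) - cdf (P n) 0
            \<le> (27 * (K + C * sqrt K / \<mu>) * M\<^sup>2) powr (1/3) * cdf (P n) 0 powr (1/3)"
      using power_le_mult_imp_le_powr[where n = 3, OF _ _ F0_pos cdf_G_fun_root_cube_le[OF distr
            F0_pos mu_pos sq_int mean_ge second_le cond_le lip ystar_nonneg ystar_zero]]
        cdf_nondecreasing[OF ystar_nonneg]
      by simp
    then show ?thesis unfolding bound_def by simp
  qed
  have "bound \<longlonglongrightarrow> 0"
    unfolding bound_def using F0_pos
    by (auto intro!: tendsto_eq_intros F0_lim tendsto_powr2 always_eventually less_imp_le)
  then have "(\<lambda>n. cdf (P n) (ystar n)) \<longlonglongrightarrow> 0"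
  proof (rule tendsto_sandwich[rotated 3])
    show "\<forall>\<^sub>F n in sequentially. 0 \<le> cdf (P n) (ystar n)"
      by (simp add: cdf_def)
    show "\<forall>\<^sub>F n in sequentially. cdf (P n) (ystar n) \<le> bound n"
      using upper by simp
  qed simp
  with upper show ?thesis unfolding bound_def by blast
qed

end
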